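(* For every $\tau\in\mathbb{Z}$, every integer $m\geq 1$ and every integer $l\geq 0$, the number \[ n_{m,l}(\tau)=\sum_{d\mid m,\ d\mid l}\frac{\mu(d)}{d^2}\,c_{\frac{m}{d},\frac{l}{d}}(\tau),\qquad c_{m,l}(\tau)=-\frac{(-1)^{m\tau+m+l}}{m^2}\binom{m}{l}\binom{m\tau+l-1}{m-1}, \] is an integer.
   Context: $\mu$ denotes the Möbius function; the sum runs over positive integers $d$ dividing both $m$ and $l$ (when $l=0$, every divisor $d$ of $m$ divides $l$). Binomial coefficients are used for all integer top arguments: for $n\geq 0$, $\binom{n}{k}$ is the usual binomial coefficient (zero if $k>n$), and for $n<0$ and $k\geq 0$ one sets $\binom{n}{k}=(-1)^k\binom{-n+k-1}{k}$. (These numbers are the genus-zero one-hole LMOV invariants of the resolved conifold with one Aganagic–Vafa brane in framing $\tau$.) *)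

theory Defs
  imports "HOL-Computational_Algebra.Computational_Algebra"
begin

definition moebius_mu :: "nat \<Rightarrow> int" where
  "moebius_mu d = (if squarefree d then (-1) ^ card (prime_factors d) else 0)"

definition int_binom :: "int \<Rightarrow> nat \<Rightarrow> int" where
  "int_binom n k = (if n \<ge> 0 then int (nat n choose k)
                    else (-1) ^ k * int (nat (-n + int k - 1) choose k))"

definition c_coeff :: "int \<Rightarrow> nat \<Rightarrow> nat \<Rightarrow> rat" where
  "c_coeff \<tau> m l = - ((-1) powi (int m * \<tau> + int m + int l)) / of_nat (m^2)
      * of_int (int_binom (int m) l) * of_int (int_binom (int m * \<tau> + int l - 1) (m - 1))"

definition n_inv :: "int \<Rightarrow> nat \<Rightarrow> nat \<Rightarrow> rat" where
  "n_inv \<tau> m l = (\<Sum>d \<in> {d. d dvd m \<and> d dvd l}.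
      of_int (moebius_mu d) / of_nat (d^2) * c_coeff \<tau> (m div d) (l div d))"

end

theory Submission
  imports Defs
begin

text \<open>
  Write c_{M,L}(\<tau>) = -C(M, L) / M^2 with an integer numerator C. Then
  m^2 n_{m,l}(\<tau>) = -\<Sum>_d \<mu>(d) C(m/d, l/d), so it suffices that p^(2v), v = v_p(m), divides
  this sum for every prime p. Grouping each d prime to p with pd turns the sum into
  \<Sum> \<mu>(d) (C(M, L) - C(M/p, L/p)) with M = m/d, L = l/d, where the second term is present only
  if p divides both M and L. If it is absent, p does not divide L, which forces p^v into each of
  the two binomial factors of C(M, L). If it is present, C(pM, pL) = C(M, L) mod p^(2+2v) by a
  Jacobsthal-type congruence: binom(pa, pb) / binom(a, b) is the product of the factors
  1 + pb/(pc + i) over c < a, 0 < i < p, hence p-adically 1 + pbH for a harmonic-type sum H, and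
  pairing i with p - i in H gains one more factor p (up to a sign when p = 2). Negative framings
  reduce to nonnegative ones through C_\<tau>(M, L) = -C_{-\<tau>}(M, M - L).
\<close>

section \<open>Rationals divisible by a prime power\<close>

text \<open>\<open>p_adic_dvd p k q\<close> says that v_p(q) \<ge> k, i.e. q lies in p^k \<int>_(p).\<close>

definition p_adic_dvd :: "nat \<Rightarrow> nat \<Rightarrow> rat \<Rightarrow> bool" where
  "p_adic_dvd p k q \<longleftrightarrow> (\<exists>a b. \<not> int p dvd b \<and> int p ^ k dvd a \<and> q = of_int a / of_int b)"

lemma p_adic_dvdI: "\<not> int p dvd b \<Longrightarrow> int p ^ k dvd a \<Longrightarrow> p_adic_dvd p k (of_int a / of_int b)"
  unfolding p_adic_dvd_def by blast

lemma p_adic_dvd_of_int: "prime p \<Longrightarrow> int p ^ k dvd a \<Longrightarrow> p_adic_dvd p k (of_int a)"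
  using p_adic_dvdI[of p 1 k a] prime_gt_1_nat[of p] by simp

lemma p_adic_dvd_of_nat: "prime p \<Longrightarrow> p ^ k dvd n \<Longrightarrow> p_adic_dvd p k (of_nat n)"
  using p_adic_dvd_of_int[of p k "int n"] by (metis of_int_of_nat_eq of_nat_dvd_iff of_nat_power)

lemma p_adic_dvd_nat_divide:
  assumes "prime p" "p ^ k dvd a" "\<not> p dvd b"
  shows "p_adic_dvd p k (of_nat a / of_nat b)"
  using p_adic_dvdI[of p "int b" k "int a"] assms by (metis int_dvd_int_iff of_int_of_nat_eq of_nat_power)

lemma p_adic_dvd_mono: "p_adic_dvd p k q \<Longrightarrow> j \<le> k \<Longrightarrow> p_adic_dvd p j q"
  unfolding p_adic_dvd_def by (metis dvd_trans le_imp_power_dvd)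

lemma p_adic_dvd_add:
  assumes "prime p" "p_adic_dvd p k q" "p_adic_dvd p k r"
  shows "p_adic_dvd p k (q + r)"
proof -
  obtain a b where ab: "\<not> int p dvd b" "int p ^ k dvd a" "q = of_int a / of_int b"
    using assms(2) unfolding p_adic_dvd_def by blast
  obtain c d where cd: "\<not> int p dvd d" "int p ^ k dvd c" "r = of_int c / of_int d"
    using assms(3) unfolding p_adic_dvd_def by blast
  have "b \<noteq> 0" "d \<noteq> 0" using ab(1) cd(1) by auto
  then have "q + r = of_int (a * d + c * b) / of_int (b * d)"
    using ab(3) cd(3) by (simp add: field_simps)
  moreover have "\<not> int p dvd b * d"
    using ab(1) cd(1) assms(1) by (simp add: prime_dvd_mult_iff)
  ultimately show ?thesis using ab(2) cd(2) by (metis p_adic_dvdI dvd_add dvd_mult2)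
qed

lemma p_adic_dvd_mult:
  assumes "prime p" "p_adic_dvd p k q" "p_adic_dvd p j r"
  shows "p_adic_dvd p (k + j) (q * r)"
proof -
  obtain a b where ab: "\<not> int p dvd b" "int p ^ k dvd a" "q = of_int a / of_int b"
    using assms(2) unfolding p_adic_dvd_def by blast
  obtain c d where cd: "\<not> int p dvd d" "int p ^ j dvd c" "r = of_int c / of_int d"
    using assms(3) unfolding p_adic_dvd_def by blast
  have "q * r = of_int (a * c) / of_int (b * d)"
    using ab(3) cd(3) by simp
  moreover have "\<not> int p dvd b * d"
    using ab(1) cd(1) assms(1) by (simp add: prime_dvd_mult_iff)
  moreover have "int p ^ (k + j) dvd a * c"
    using ab(2) cd(2) by (simp add: power_add mult_dvd_mono)
  ultimately show ?thesis by (metis p_adic_dvdI)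
qed

lemma p_adic_dvd_sum:
  assumes "prime p" "\<And>i. i \<in> S \<Longrightarrow> p_adic_dvd p k (f i)"
  shows "p_adic_dvd p k (sum f S)"
  using assms(2)
  by (induction S rule: infinite_finite_induct)
    (auto simp: assms(1) p_adic_dvd_add p_adic_dvd_of_int[of p k 0, simplified])

lemma dvd_of_p_adic_dvd:
  assumes "prime p" "p_adic_dvd p k (of_int x)"
  shows "int p ^ k dvd x"
proof -
  obtain a b where ab: "\<not> int p dvd b" "int p ^ k dvd a" "of_int x = (of_int a / of_int b :: rat)"
    using assms(2) unfolding p_adic_dvd_def by blast
  then have "x * b = a"
    by (metis divide_eq_eq dvd_0_right of_int_0_eq_iff of_int_eq_iff of_int_mult)
  then have "int p ^ k dvd x * b" using ab(2) by simp
  moreover have "coprime (int p ^ k) b"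
    using ab(1) assms(1) by (simp add: prime_imp_coprime)
  ultimately show ?thesis using coprime_dvd_mult_left_iff by blast
qed

section \<open>Binomial coefficients at multiples of a prime\<close>

fun pfree_fact :: "nat \<Rightarrow> nat \<Rightarrow> nat" where
  "pfree_fact p 0 = 1"
| "pfree_fact p (Suc n) = pfree_fact p n * (\<Prod>i\<in>{1..<p}. p * n + i)"

lemma pfree_fact_pos: "0 < p \<Longrightarrow> 0 < pfree_fact p n"
  by (induction n) (auto simp: prod_pos)

lemma fact_add_eq_prod: "fact (m + k) = (fact m :: nat) * (\<Prod>i\<in>{1..k}. m + i)"
  by (induction k) (simp_all add: prod.cl_ivl_Suc algebra_simps)

lemma fact_mult_eq_pfree_fact:
  assumes "0 < p"
  shows "fact (p * n) = p ^ n * fact n * pfree_fact p n"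
proof (induction n)
  case (Suc n)
  have "{1..p} = insert p {1..<p}" using assms by auto
  then have "fact (p * Suc n) = fact (p * n) * (p * Suc n * (\<Prod>i\<in>{1..<p}. p * n + i))"
    using fact_add_eq_prod[of "p * n" p] by (simp add: algebra_simps)
  with Suc show ?case by (simp add: algebra_simps)
qed simp

lemma pfree_fact_add:
  "pfree_fact p (x + y) = pfree_fact p y * (\<Prod>(c, i)\<in>{..<x} \<times> {1..<p}. p * (y + c) + i)"
  by (induction x) (auto simp: algebra_simps simp flip: prod.cartesian_product)

definition binom_ratio :: "nat \<Rightarrow> nat \<Rightarrow> nat \<Rightarrow> rat" where
  "binom_ratio p x y =
     of_nat (pfree_fact p (x + y)) / (of_nat (pfree_fact p x) * of_nat (pfree_fact p y))"

lemma binom_ratio_commute: "binom_ratio p x y = binom_ratio p y x"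
  unfolding binom_ratio_def by (simp add: add.commute mult.commute)

lemma binomial_scaled_eq:
  assumes "0 < p"
  shows "(of_nat (p * (b + c) choose p * b) :: rat) = of_nat (b + c choose b) * binom_ratio p b c"
proof -
  have fact: "(fact (p * n) :: rat) = of_nat p ^ n * fact n * of_nat (pfree_fact p n)" for n
    using fact_mult_eq_pfree_fact[OF assms] by (metis of_nat_fact of_nat_mult of_nat_power)
  have "(of_nat (p * (b + c) choose p * b) :: rat) = fact (p * (b + c)) / (fact (p * b) * fact (p * c))"
    by (simp add: binomial_fact add_mult_distrib2)
  also have "\<dots> = fact (b + c) / (fact b * fact c) * binom_ratio p b c"
    unfolding fact binom_ratio_def using assms pfree_fact_pos[OF assms]
    by (simp add: field_simps power_add)
  also have "\<dots> = of_nat (b + c choose b) * binom_ratio p b c"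
    by (simp add: binomial_fact)
  finally show ?thesis .
qed

lemma binomial_pred_scaled_eq:
  assumes "0 < p" "1 \<le> M"
  shows "(of_nat (p * (M + c) - 1 choose (p * M - 1)) :: rat)
    = of_nat (M + c - 1 choose (M - 1)) * binom_ratio p M c"
proof -
  have absorb: "(of_nat (n - 1 choose (k - 1)) :: rat) = of_nat k / of_nat n * of_nat (n choose k)"
    if "1 \<le> k" "k \<le> n" for n k
    using Suc_times_binomial[of "k - 1" "n - 1"] that
    by (simp add: field_simps flip: of_nat_mult)
  have "(of_nat (p * (M + c) - 1 choose (p * M - 1)) :: rat)
      = of_nat (p * M) / of_nat (p * (M + c)) * of_nat (p * (M + c) choose p * M)"
    using assms by (intro absorb) simp_all
  also have "\<dots> = of_nat M / of_nat (M + c) * of_nat (M + c choose M) * binom_ratio p M c"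
    using assms by (simp add: binomial_scaled_eq)
  also have "\<dots> = of_nat (M + c - 1 choose (M - 1)) * binom_ratio p M c"
    using assms absorb[of M "M + c"] by simp
  finally show ?thesis .
qed

lemma binom_ratio_eq_prod:
  assumes "0 < p"
  shows "binom_ratio p x y =
    (\<Prod>(c, i)\<in>{..<x} \<times> {1..<p}. 1 + of_nat (p * y) / of_nat (p * c + i))"
proof -
  have num: "(of_nat (pfree_fact p (x + y)) :: rat)
      = of_nat (pfree_fact p y) * (\<Prod>(c, i)\<in>{..<x} \<times> {1..<p}. of_nat (p * (y + c) + i))"
    unfolding pfree_fact_add[of p x y] by (simp add: of_nat_prod case_prod_beta)
  have den: "(of_nat (pfree_fact p x) :: rat)
      = (\<Prod>(c, i)\<in>{..<x} \<times> {1..<p}. of_nat (p * c + i))"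
    using pfree_fact_add[of p x 0] by (simp add: of_nat_prod case_prod_beta)
  have "binom_ratio p x y =
      (\<Prod>(c, i)\<in>{..<x} \<times> {1..<p}. of_nat (p * (y + c) + i))
        / (\<Prod>(c, i)\<in>{..<x} \<times> {1..<p}. of_nat (p * c + i))"
    unfolding binom_ratio_def num den using pfree_fact_pos[OF assms, of y] by simp
  also have "\<dots> =
      (\<Prod>(c, i)\<in>{..<x} \<times> {1..<p}. of_nat (p * (y + c) + i) / of_nat (p * c + i))"
    by (simp add: prod_dividef case_prod_beta)
  also have "\<dots> = (\<Prod>(c, i)\<in>{..<x} \<times> {1..<p}. 1 + of_nat (p * y) / of_nat (p * c + i))"
  proof (intro prod.cong refl, clarify)
    fix c i :: nat assume "i \<in> {1..<p}"
    then have "p * c + i \<noteq> 0" by simp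
    then have "(of_nat (p * c + i) :: rat) \<noteq> 0" by (simp only: of_nat_eq_0_iff not_False_eq_True)
    then show "of_nat (p * (y + c) + i) / of_nat (p * c + i)
        = 1 + of_nat (p * y) / (of_nat (p * c + i) :: rat)"
      by (simp add: field_simps)
  qed
  finally show ?thesis .
qed

lemma p_adic_dvd_prod_one_plus:
  assumes "prime p" "finite S" "\<And>i. i \<in> S \<Longrightarrow> p_adic_dvd p k (x i)"
  shows "p_adic_dvd p (2 * k) ((\<Prod>i\<in>S. 1 + x i) - 1 - (\<Sum>i\<in>S. x i))"
  using assms(2,3)
proof (induction S rule: finite_induct)
  case empty
  then show ?case using p_adic_dvd_of_int[OF assms(1), of "2 * k" 0] by simp
next
  case (insert a F)
  let ?P = "\<Prod>i\<in>F. 1 + x i" and ?S = "\<Sum>i\<in>F. x i"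
  have xa: "p_adic_dvd p k (x a)" using insert.prems by simp
  have "p_adic_dvd p 0 (1 + x a)"
    using p_adic_dvd_add[OF assms(1) p_adic_dvd_of_int[OF assms(1), of 0 1]] p_adic_dvd_mono[OF xa] by simp
  then have "p_adic_dvd p (2 * k) ((1 + x a) * (?P - 1 - ?S))"
    using p_adic_dvd_mult[OF assms(1)] insert by fastforce
  moreover have "p_adic_dvd p k ?S"
    by (rule p_adic_dvd_sum[OF assms(1)]) (use insert.prems in auto)
  then have "p_adic_dvd p (2 * k) (x a * ?S)"
    using p_adic_dvd_mult[OF assms(1) xa] by (simp add: mult_2)
  moreover have "(\<Prod>i\<in>insert a F. 1 + x i) - 1 - (\<Sum>i\<in>insert a F. x i)
      = (1 + x a) * (?P - 1 - ?S) + x a * ?S"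
    using insert(1,2) by (simp add: algebra_simps)
  ultimately show ?case by (simp add: p_adic_dvd_add[OF assms(1)])
qed

definition pfree_harmonic :: "nat \<Rightarrow> nat \<Rightarrow> rat" where
  "pfree_harmonic p x = (\<Sum>(c, i)\<in>{..<x} \<times> {1..<p}. 1 / of_nat (p * c + i))"

lemma not_prime_dvd_unit_offset:
  fixes p c i :: nat
  shows "prime p \<Longrightarrow> i \<in> {1..<p} \<Longrightarrow> \<not> p dvd p * c + i"
  using dvd_imp_le[of p i] by (auto simp: dvd_add_right_iff)

lemma binom_ratio_expansion:
  assumes "prime p" "p ^ e dvd y"
  shows "p_adic_dvd p (2 * (1 + e)) (binom_ratio p x y - 1 - of_nat (p * y) * pfree_harmonic p x)"
proof -
  have "p_adic_dvd p (1 + e) (of_nat (p * y) / of_nat (p * c + i))" if "i \<in> {1..<p}" for c i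
    by (rule p_adic_dvd_nat_divide[OF assms(1) _ not_prime_dvd_unit_offset[OF assms(1) that]])
      (use assms(2) in \<open>simp add: mult_dvd_mono\<close>)
  then have "p_adic_dvd p (2 * (1 + e))
      ((\<Prod>(c, i)\<in>{..<x} \<times> {1..<p}. 1 + of_nat (p * y) / of_nat (p * c + i)) - 1
        - (\<Sum>(c, i)\<in>{..<x} \<times> {1..<p}. of_nat (p * y) / of_nat (p * c + i)))"
    using p_adic_dvd_prod_one_plus[OF assms(1), of "{..<x} \<times> {1..<p}" "1 + e"
        "\<lambda>(c, i). of_nat (p * y) / of_nat (p * c + i)"]
    by (auto simp: case_prod_beta)
  moreover have "(\<Sum>(c, i)\<in>{..<x} \<times> {1..<p}. (of_nat (p * y) / of_nat (p * c + i) :: rat))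
      = of_nat (p * y) * pfree_harmonic p x"
    unfolding pfree_harmonic_def by (simp add: sum_distrib_left case_prod_beta)
  ultimately show ?thesis
    using binom_ratio_eq_prod[of p x y] prime_gt_0_nat[OF assms(1)] by simp
qed

definition pfree_harmonic_pairs :: "nat \<Rightarrow> nat \<Rightarrow> rat" where
  "pfree_harmonic_pairs p x =
     (\<Sum>(c, i)\<in>{..<x} \<times> {1..<p}. 1 / (of_nat (p * c + i) * of_nat (p * (x - 1 - c) + (p - i))))"

lemma pfree_harmonic_reflect: "2 * pfree_harmonic p x = of_nat (p * x) * pfree_harmonic_pairs p x"
proof -
  \<comment> \<open>The involution (c, i) \<mapsto> (x - 1 - c, p - i) pairs denominators summing to px.\<close>
  let ?I = "{..<x} \<times> {1..<p}"
  let ?f = "\<lambda>(c, i). 1 / (of_nat (p * c + i) :: rat)"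
  let ?r = "\<lambda>(c, i). (x - 1 - c, p - i)"
  have "pfree_harmonic p x = (\<Sum>z\<in>?I. ?f (?r z))"
    unfolding pfree_harmonic_def by (rule sum.reindex_bij_witness[of _ ?r ?r]) auto
  then have "2 * pfree_harmonic p x = (\<Sum>z\<in>?I. ?f z) + (\<Sum>z\<in>?I. ?f (?r z))"
    unfolding mult_2 by (simp only: pfree_harmonic_def)
  also have "\<dots> = (\<Sum>z\<in>?I. ?f z + ?f (?r z))"
    by (rule sum.distrib[symmetric])
  also have "\<dots> = of_nat (p * x) * pfree_harmonic_pairs p x"
    unfolding pfree_harmonic_pairs_def sum_distrib_left
  proof (rule sum.cong[OF refl])
    fix z assume "z \<in> ?I"
    then obtain c i where z: "z = (c, i)" "c < x" "1 \<le> i" "i < p" by auto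
    define a where "a = p * c + i"
    define b where "b = p * (x - 1 - c) + (p - i)"
    have "a + b = p * x" "a \<noteq> 0" "b \<noteq> 0"
    proof -
      obtain d where "x = Suc (c + d)" using z(2) less_iff_Suc_add by blast
      then show "a + b = p * x" "a \<noteq> 0" "b \<noteq> 0"
        unfolding a_def b_def using z(3,4) by (simp_all add: algebra_simps)
    qed
    then have "1 / of_nat a + 1 / of_nat b = of_nat (p * x) * (1 / (of_nat a * of_nat b) :: rat)"
      by (simp add: field_simps flip: of_nat_add)
    then show "?f z + ?f (?r z) = of_nat (p * x) *
        (case z of (c, i) \<Rightarrow> 1 / (of_nat (p * c + i) * of_nat (p * (x - 1 - c) + (p - i))))"
      unfolding z a_def b_def by simp
  qed
  finally show ?thesis .
qed

lemma p_adic_dvd_pfree_harmonic_pairs: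
  assumes "prime p"
  shows "p_adic_dvd p 0 (pfree_harmonic_pairs p x)"
  unfolding pfree_harmonic_pairs_def
proof (rule p_adic_dvd_sum[OF assms])
  fix z assume "z \<in> {..<x} \<times> {1..<p}"
  then obtain c i where z: "z = (c, i)" "i \<in> {1..<p}" by auto
  then have "p - i \<in> {1..<p}" by auto
  then have "\<not> p dvd (p * c + i) * (p * (x - 1 - c) + (p - i))"
    using not_prime_dvd_unit_offset[OF assms] z(2) assms by (metis prime_dvd_mult_iff)
  then have "p_adic_dvd p 0 (of_nat 1 / of_nat ((p * c + i) * (p * (x - 1 - c) + (p - i))))"
    by (intro p_adic_dvd_nat_divide[OF assms]) simp_all
  then show "p_adic_dvd p 0 (case z of (c, i) \<Rightarrow>
      1 / (of_nat (p * c + i) * of_nat (p * (x - 1 - c) + (p - i))))"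
    unfolding z by simp
qed

lemma p_adic_dvd_two_inverse_odd:
  assumes "odd b"
  shows "p_adic_dvd 2 1 (1 / of_nat b - 1)"
proof -
  have "1 / of_nat b - 1 = (of_int (1 - int b) / of_int (int b) :: rat)"
    using assms odd_pos[of b] by (auto simp: diff_divide_distrib)
  moreover have "2 dvd 1 - int b" "\<not> 2 dvd int b" using assms by presburger+
  ultimately show ?thesis using p_adic_dvdI[of 2 "int b" 1 "1 - int b"] by simp
qed

lemma pfree_harmonic_pairs_two: "p_adic_dvd 2 1 (pfree_harmonic_pairs 2 x - of_nat x)"
proof -
  have "{1..<2} = {1::nat}" by auto
  then have "pfree_harmonic_pairs 2 x - of_nat x
      = (\<Sum>c<x. 1 / of_nat ((2 * c + 1) * (2 * (x - 1 - c) + (2 - 1))) - 1)"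
    unfolding pfree_harmonic_pairs_def
    by (simp only: sum.cartesian_product' sum_subtractf sum_constant card_lessThan mult_1_right
        sum.empty sum.insert finite.emptyI empty_iff not_False_eq_True add_0_right prod.case of_nat_mult)
  moreover have
    "p_adic_dvd 2 1 (\<Sum>c<x. 1 / of_nat ((2 * c + 1) * (2 * (x - 1 - c) + (2 - 1))) - (1::rat))"
    by (rule p_adic_dvd_sum[OF two_is_prime_nat], rule p_adic_dvd_two_inverse_odd) simp
  ultimately show ?thesis by simp
qed

lemma p_adic_dvd_pfree_harmonic:
  assumes "prime p" "p ^ e dvd x" "p = 2 \<Longrightarrow> even x"
  shows "p_adic_dvd p (1 + e) (pfree_harmonic p x)"
proof (cases "p = 2")
  case True
  have "p_adic_dvd 2 1 (of_nat x)"
    using assms(3) True by (intro p_adic_dvd_of_nat) auto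
  then have "p_adic_dvd 2 1 (of_nat x + (pfree_harmonic_pairs 2 x - of_nat x))"
    by (rule p_adic_dvd_add[OF two_is_prime_nat _ pfree_harmonic_pairs_two])
  then have "p_adic_dvd 2 1 (pfree_harmonic_pairs 2 x)" by simp
  then have "p_adic_dvd 2 (e + 1) (of_nat x * pfree_harmonic_pairs 2 x)"
    using assms(2) True by (intro p_adic_dvd_mult[OF two_is_prime_nat] p_adic_dvd_of_nat) auto
  moreover have "pfree_harmonic 2 x = of_nat x * pfree_harmonic_pairs 2 x"
    using pfree_harmonic_reflect[of 2 x] by simp
  ultimately show ?thesis using True by simp
next
  case False
  then have "\<not> p dvd 2"
    using assms(1) primes_dvd_imp_eq two_is_prime_nat by blast
  then have "p_adic_dvd p 0 (of_nat 1 / of_nat 2)"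
    by (intro p_adic_dvd_nat_divide[OF assms(1)]) simp_all
  moreover have "p_adic_dvd p (1 + e) (of_nat (p * x))"
    using assms(2) by (intro p_adic_dvd_of_nat[OF assms(1)]) (simp add: mult_dvd_mono)
  ultimately have "p_adic_dvd p (0 + (1 + e + 0))
      (of_nat 1 / of_nat 2 * (of_nat (p * x) * pfree_harmonic_pairs p x))"
    by (intro p_adic_dvd_mult[OF assms(1)] p_adic_dvd_pfree_harmonic_pairs[OF assms(1)])
  moreover have "pfree_harmonic p x = of_nat 1 / of_nat 2 * (of_nat (p * x) * pfree_harmonic_pairs p x)"
    using pfree_harmonic_reflect[of p x] by simp
  ultimately show ?thesis by (simp only: add_0 add_0_right)
qed

lemma binom_ratio_congr_one:
  assumes "prime p" "p ^ e dvd x" "p ^ e dvd y" "p = 2 \<Longrightarrow> even x"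
  shows "p_adic_dvd p (2 + 2 * e) (binom_ratio p x y - 1)"
proof -
  have "p_adic_dvd p (1 + e) (of_nat (p * y))"
    using assms(3) by (intro p_adic_dvd_of_nat[OF assms(1)]) (simp add: mult_dvd_mono)
  then have "p_adic_dvd p (1 + e + (1 + e)) (of_nat (p * y) * pfree_harmonic p x)"
    by (intro p_adic_dvd_mult[OF assms(1)] p_adic_dvd_pfree_harmonic[OF assms(1,2,4)])
  then have "p_adic_dvd p (2 + 2 * e)
      ((binom_ratio p x y - 1 - of_nat (p * y) * pfree_harmonic p x) + of_nat (p * y) * pfree_harmonic p x)"
    using binom_ratio_expansion[OF assms(1,3), of x]
    by (intro p_adic_dvd_add[OF assms(1)]) (simp_all add: mult_2)
  then show ?thesis by simp
qed

lemma binom_ratio_two_odd: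
  assumes "odd x" "odd y"
  shows "p_adic_dvd 2 2 (binom_ratio 2 x y + 1)"
proof -
  \<comment> \<open>H_2(x) = x W with W = x mod 2, so 2y H_2(x) = 2yx^2 = 2 mod 4.\<close>
  define E where "E = pfree_harmonic_pairs 2 x - of_nat x"
  have E: "p_adic_dvd 2 1 E"
    unfolding E_def by (rule pfree_harmonic_pairs_two)
  have "even (1 + y * x * x)" using assms by simp
  then have "p_adic_dvd 2 1 (of_nat (1 + y * x * x))"
    by (intro p_adic_dvd_of_nat[OF two_is_prime_nat]) simp
  moreover have "p_adic_dvd 2 (0 + 1) (of_nat (y * x) * E)"
    by (rule p_adic_dvd_mult[OF two_is_prime_nat p_adic_dvd_of_nat[OF two_is_prime_nat] E]) simp
  ultimately have sum: "p_adic_dvd 2 1 (of_nat (1 + y * x * x) + of_nat (y * x) * E)"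
    using p_adic_dvd_add[OF two_is_prime_nat] by simp
  have "p_adic_dvd 2 (1 + 1) (of_nat 2 * (of_nat (1 + y * x * x) + of_nat (y * x) * E))"
    by (intro p_adic_dvd_mult[OF two_is_prime_nat _ sum] p_adic_dvd_of_nat[OF two_is_prime_nat]) simp
  then have "p_adic_dvd 2 2 (of_nat 2 * (of_nat (1 + y * x * x) + of_nat (y * x) * E))"
    by (simp only: one_add_one)
  moreover have "p_adic_dvd 2 2 (binom_ratio 2 x y - 1 - of_nat (2 * y) * pfree_harmonic 2 x)"
    using binom_ratio_expansion[OF two_is_prime_nat, of 0 y x] by simp
  moreover have "pfree_harmonic 2 x = of_nat x * (of_nat x + E)"
    unfolding E_def using pfree_harmonic_reflect[of 2 x] by simp
  ultimately have "p_adic_dvd 2 2 ((binom_ratio 2 x y - 1 - of_nat (2 * y) * pfree_harmonic 2 x)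
      + of_nat 2 * (of_nat (1 + y * x * x) + of_nat (y * x) * E))"
    by (intro p_adic_dvd_add[OF two_is_prime_nat]) simp_all
  moreover have "(binom_ratio 2 x y - 1 - of_nat (2 * y) * pfree_harmonic 2 x)
      + of_nat 2 * (of_nat (1 + y * x * x) + of_nat (y * x) * E) = binom_ratio 2 x y + 1"
    unfolding \<open>pfree_harmonic 2 x = _\<close> by (simp add: algebra_simps)
  ultimately show ?thesis by (simp only:)
qed

definition ratio_sign :: "nat \<Rightarrow> nat \<Rightarrow> nat \<Rightarrow> int" where
  "ratio_sign p a b = (if p = 2 \<and> odd a \<and> odd b then -1 else 1)"

lemma binom_ratio_congr:
  assumes "prime p" "p ^ e dvd a" "p ^ e dvd b"
  shows "p_adic_dvd p (2 + 2 * e) (binom_ratio p a b - of_int (ratio_sign p a b))"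
proof -
  consider "p \<noteq> 2 \<or> even a" | "p = 2" "even b" | "p = 2" "odd a" "odd b" by blast
  then show ?thesis
  proof cases
    case 1
    then show ?thesis
      using binom_ratio_congr_one[OF assms] unfolding ratio_sign_def by auto
  next
    case 2
    then show ?thesis
      using binom_ratio_congr_one[OF assms(1,3,2)] unfolding ratio_sign_def
      by (auto simp: binom_ratio_commute)
  next
    case 3
    then have "e = 0" using assms(2) by (cases e) auto
    with 3 show ?thesis
      using binom_ratio_two_odd[of a b] unfolding ratio_sign_def by simp
  qed
qed

lemma prime_power_dvd_cancel_left:
  fixes p a X :: nat
  assumes "prime p" "a \<noteq> 0" "p ^ t dvd a * X" "\<not> p ^ Suc u dvd a"
  shows "p ^ (t - u) dvd X"
proof (cases "X = 0")
  case False
  have not_unit: "\<not> is_unit p" using assms(1) by (simp add: prime_nat_iff)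
  have "t \<le> multiplicity p (a * X)"
    using assms(2,3) False not_unit by (intro multiplicity_geI) simp_all
  also have "\<dots> = multiplicity p a + multiplicity p X"
    using assms(1,2) False by (intro prime_elem_multiplicity_mult_distrib) simp_all
  finally have "t \<le> multiplicity p a + multiplicity p X" .
  moreover have "multiplicity p a < Suc u"
    using assms(2,4) not_unit by (intro multiplicity_lessI)
  ultimately show ?thesis by (intro multiplicity_dvd') linarith
qed simp

lemma prime_power_dvd_binomial_pair:
  fixes p M L A :: nat
  assumes "prime p" "1 \<le> M" "\<not> p ^ Suc u dvd L" "\<not> p ^ Suc u dvd A"
  shows "p ^ (2 * (multiplicity p M - u)) dvd (M choose L) * (A - 1 choose (M - 1))"
proof -
  have "L \<noteq> 0" using assms(3) by (metis dvd_0_right)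
  have "A \<noteq> 0" using assms(4) by (metis dvd_0_right)
  have pM: "p ^ multiplicity p M dvd M" by (rule multiplicity_dvd)
  have "L * (M choose L) = M * (M - 1 choose (L - 1))"
    using Suc_times_binomial[of "L - 1" "M - 1"] \<open>L \<noteq> 0\<close> assms(2) by simp
  then have "p ^ (multiplicity p M - u) dvd (M choose L)"
    using pM \<open>L \<noteq> 0\<close> by (intro prime_power_dvd_cancel_left[OF assms(1) _ _ assms(3)]) simp_all
  moreover have "A * (A - 1 choose (M - 1)) = M * (A choose M)"
    using Suc_times_binomial[of "M - 1" "A - 1"] \<open>A \<noteq> 0\<close> assms(2) by simp
  then have "p ^ (multiplicity p M - u) dvd (A - 1 choose (M - 1))"
    using pM \<open>A \<noteq> 0\<close> by (intro prime_power_dvd_cancel_left[OF assms(1) _ _ assms(4)]) simp_all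
  ultimately show ?thesis by (simp add: mult_2 power_add mult_dvd_mono)
qed

text \<open>The witness is u = min (v_p M) (v_p L).\<close>

lemma binomial_pair_common_level:
  fixes p M L A :: nat
  assumes "prime p" "1 \<le> M" "M dvd A - L" "L \<le> A"
  obtains u where "u \<le> multiplicity p M" "p ^ u dvd L" "p ^ u dvd M"
    "p ^ (2 * (multiplicity p M - u)) dvd (M choose L) * (A - 1 choose (M - 1))"
proof (cases "p ^ multiplicity p M dvd L")
  case True
  then show ?thesis using that[of "multiplicity p M"] multiplicity_dvd[of p M] by simp
next
  case False
  define u where "u = multiplicity p L"
  have not_unit: "\<not> is_unit p" using assms(1) by (simp add: prime_nat_iff)
  have "L \<noteq> 0" using False by (metis dvd_0_right)
  have uL: "p ^ u dvd L" unfolding u_def by (rule multiplicity_dvd)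
  have "\<not> p ^ Suc u dvd L"
    using multiplicity_geI[OF \<open>L \<noteq> 0\<close> not_unit] unfolding u_def by fastforce
  have "u < multiplicity p M"
    using False uL le_imp_power_dvd[of "multiplicity p M" u p] dvd_trans by (meson not_le)
  then have "p ^ Suc u dvd M"
    by (meson Suc_leI dvd_trans le_imp_power_dvd multiplicity_dvd)
  have "\<not> p ^ Suc u dvd A"
  proof
    assume "p ^ Suc u dvd A"
    moreover have "p ^ Suc u dvd A - L"
      using \<open>p ^ Suc u dvd M\<close> assms(3) by (rule dvd_trans)
    ultimately have "p ^ Suc u dvd A - (A - L)" by (rule dvd_diff_nat)
    then show False using \<open>\<not> p ^ Suc u dvd L\<close> assms(4) by simp
  qed
  show ?thesis
  proof (rule that)
    show "u \<le> multiplicity p M" "p ^ u dvd L" using \<open>u < _\<close> uL by simp_all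
    show "p ^ u dvd M" using \<open>p ^ Suc u dvd M\<close> by (simp add: dvd_mult_right)
    show "p ^ (2 * (multiplicity p M - u)) dvd (M choose L) * (A - 1 choose (M - 1))"
      by (rule prime_power_dvd_binomial_pair) fact+
  qed
qed

lemma ratio_sign_mult:
  assumes "L \<le> M" "M \<le> A" "M dvd A - L"
  shows "ratio_sign p L (M - L) * ratio_sign p M (A - M) = (if p = 2 then (-1) ^ (A - M) else 1)"
proof -
  have "even M \<Longrightarrow> even (A - L)" using assms(3) dvd_trans by blast
  then show ?thesis
    using assms(1,2) by (auto simp: ratio_sign_def even_diff_nat minus_one_power_iff)
qed

lemma p_adic_dvd_mult_congr:
  assumes "prime p" "p_adic_dvd p a Y" "p_adic_dvd p b (R1 - s1)" "p_adic_dvd p b (R2 - s2)"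
    "p_adic_dvd p 0 s1" "p_adic_dvd p 0 s2"
  shows "p_adic_dvd p (a + b) (Y * R1 * R2 - Y * (s1 * s2))"
proof -
  have "p_adic_dvd p 0 ((R2 - s2) + s2)"
    using p_adic_dvd_mono[OF assms(4)] assms(6) by (intro p_adic_dvd_add[OF assms(1)]) simp_all
  then have "p_adic_dvd p (a + b + 0) (Y * (R1 - s1) * R2)"
    by (intro p_adic_dvd_mult[OF assms(1)] assms(2,3)) simp
  moreover have "p_adic_dvd p (0 + (a + b)) (s1 * (Y * (R2 - s2)))"
    by (intro p_adic_dvd_mult[OF assms(1)] assms(2,4,5))
  ultimately have "p_adic_dvd p (a + b) (Y * (R1 - s1) * R2 + s1 * (Y * (R2 - s2)))"
    by (intro p_adic_dvd_add[OF assms(1)]) simp_all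
  then show ?thesis by (simp add: algebra_simps)
qed

lemma binomial_pair_scaled_eq:
  assumes "0 < p" "1 \<le> M" "L \<le> M" "M \<le> A"
  shows "(of_nat (p * M choose p * L) * of_nat (p * A - 1 choose (p * M - 1)) :: rat)
    = of_nat (M choose L) * of_nat (A - 1 choose (M - 1)) * binom_ratio p L (M - L) * binom_ratio p M (A - M)"
  using binomial_scaled_eq[OF assms(1), of L "M - L"] binomial_pred_scaled_eq[OF assms(1,2), of "A - M"]
    assms(3,4)
  by simp

lemma binomial_pair_congr:
  fixes p M L A :: nat
  assumes "prime p" "1 \<le> M" "L \<le> M" "M \<le> A" "M dvd A - L"
  shows "int p ^ (2 + 2 * multiplicity p M) dvd
      int (p * M choose p * L) * int (p * A - 1 choose (p * M - 1))
      - (if p = 2 then (-1) ^ (A - M) else 1) * (int (M choose L) * int (A - 1 choose (M - 1)))"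
proof -
  define t where "t = multiplicity p M"
  obtain u where u: "u \<le> t" "p ^ u dvd L" "p ^ u dvd M"
    and "p ^ (2 * (t - u)) dvd (M choose L) * (A - 1 choose (M - 1))"
    using binomial_pair_common_level[OF assms(1,2,5)] assms(3,4) unfolding t_def by force
  then have Y: "p_adic_dvd p (2 * (t - u)) (of_nat (M choose L) * of_nat (A - 1 choose (M - 1)))"
    using p_adic_dvd_of_nat[OF assms(1)] by (metis of_nat_mult)
  have "p ^ u dvd A - L" using u(3) assms(5) by (rule dvd_trans)
  then have "p ^ u dvd A" using u(2) assms(3,4) by (metis dvd_add le_add_diff_inverse2 le_trans)
  have "p_adic_dvd p (2 * (t - u) + (2 + 2 * u))
      (of_nat (M choose L) * of_nat (A - 1 choose (M - 1)) * binom_ratio p L (M - L) * binom_ratio p M (A - M)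
       - of_nat (M choose L) * of_nat (A - 1 choose (M - 1))
         * (of_int (ratio_sign p L (M - L)) * of_int (ratio_sign p M (A - M))))"
    using u \<open>p ^ u dvd A\<close>
    by (intro p_adic_dvd_mult_congr[OF assms(1) Y] binom_ratio_congr[OF assms(1)]
        p_adic_dvd_of_int[OF assms(1)]) (simp_all add: dvd_diff_nat)
  moreover have "2 * (t - u) + (2 + 2 * u) = 2 + 2 * t" using u(1) by simp
  moreover have "(of_int (ratio_sign p L (M - L)) * of_int (ratio_sign p M (A - M)) :: rat)
      = of_int (if p = 2 then (-1) ^ (A - M) else 1)"
    unfolding of_int_mult[symmetric] ratio_sign_mult[OF assms(3-5)] ..
  ultimately show ?thesis
    using binomial_pair_scaled_eq[of p M L A] assms prime_gt_0_nat
    unfolding t_def by (intro dvd_of_p_adic_dvd[OF assms(1)]) (simp add: algebra_simps)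
qed

section \<open>The numerators of the LMOV invariants\<close>

definition neg_one_powi :: "int \<Rightarrow> int" where
  "neg_one_powi k = (if even k then 1 else -1)"

lemma neg_one_powi_of_nat: "neg_one_powi (int n) = (-1) ^ n"
  unfolding neg_one_powi_def by (simp add: minus_one_power_iff)

definition c_numerator :: "int \<Rightarrow> nat \<Rightarrow> nat \<Rightarrow> int" where
  "c_numerator \<tau> M L = neg_one_powi (int M * \<tau> + int M + int L) * int (M choose L)
     * int_binom (int M * \<tau> + int L - 1) (M - 1)"

lemma c_coeff_eq: "c_coeff \<tau> M L = - of_int (c_numerator \<tau> M L) / of_nat (M ^ 2)"
proof -
  have "(-1::rat) powi k = of_int (neg_one_powi k)" for k
    unfolding neg_one_powi_def by (simp add: power_int_minus_left)
  then show ?thesis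
    unfolding c_coeff_def c_numerator_def by (simp add: int_binom_def)
qed

lemma c_numerator_nonneg_eq:
  assumes "1 \<le> M * k + L"
  shows "c_numerator (int k) M L
    = (-1) ^ (M * k + L + M) * int (M choose L) * int (M * k + L - 1 choose (M - 1))"
proof -
  have "int M * int k + int M + int L = int (M * k + L + M)" by simp
  moreover have "int M * int k + int L - 1 = int (M * k + L - 1)" using assms by simp
  ultimately show ?thesis
    unfolding c_numerator_def int_binom_def
    by (simp only: neg_one_powi_of_nat nat_int of_nat_0_le_iff if_True)
qed

lemma c_numerator_vanish:
  assumes "1 \<le> int M * \<tau> + int L" "int M * \<tau> + int L < int M"
  shows "c_numerator \<tau> M L = 0"
proof -
  have "nat (int M * \<tau> + int L - 1) < M - 1" using assms by linarith
  then show ?thesis using assms(1) unfolding c_numerator_def int_binom_def by simp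
qed

lemma c_numerator_vanish_scaled:
  assumes "0 < p" "1 \<le> int M * \<tau> + int L" "int M * \<tau> + int L < int M"
  shows "c_numerator \<tau> (p * M) (p * L) = 0"
proof (rule c_numerator_vanish)
  have "int (p * M) * \<tau> + int (p * L) = int p * (int M * \<tau> + int L)"
    by (simp add: algebra_simps)
  then show "1 \<le> int (p * M) * \<tau> + int (p * L)" "int (p * M) * \<tau> + int (p * L) < int (p * M)"
    using assms mult_mono[of 1 "int p" 1 "int M * \<tau> + int L"] by simp_all
qed

lemma c_numerator_reflect:
  assumes "1 \<le> M" "L \<le> M" "int M * \<tau> + int L \<le> 0"
  shows "c_numerator \<tau> M L = - c_numerator (- \<tau>) M (M - L)"
proof -
  define A where "A = nat (int M - int M * \<tau> - int L)"
  have A: "int A = int M - int M * \<tau> - int L" "M \<le> A" unfolding A_def using assms(3) by simp_all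
  have ib: "int_binom (int M * \<tau> + int L - 1) (M - 1) = (-1) ^ (M - 1) * int (A - 1 choose (M - 1))"
  proof -
    have "nat (- (int M * \<tau> + int L - 1) + int (M - 1) - 1) = A - 1"
      using A assms(1) by linarith
    then show ?thesis using assms(3) unfolding int_binom_def by simp
  qed
  have ib_reflected: "int_binom (int M * - \<tau> + int (M - L) - 1) (M - 1) = int (A - 1 choose (M - 1))"
  proof -
    have "int M * - \<tau> + int (M - L) - 1 = int (A - 1)" using A assms(1,2) by (simp add: of_nat_diff)
    then show ?thesis unfolding int_binom_def by simp
  qed
  have sign: "neg_one_powi (int M * \<tau> + int M + int L) * (-1) ^ (M - 1)
      = - neg_one_powi (int M * - \<tau> + int M + int (M - L))"
  proof -
    have "(-1::int) ^ (M - 1) = neg_one_powi (int M - 1)"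
      using assms(1) by (simp add: of_nat_diff flip: neg_one_powi_of_nat)
    then show ?thesis using assms(2) unfolding neg_one_powi_def by (auto simp: of_nat_diff)
  qed
  have "c_numerator \<tau> M L = neg_one_powi (int M * \<tau> + int M + int L) * (-1) ^ (M - 1)
      * int (M choose L) * int (A - 1 choose (M - 1))"
    unfolding c_numerator_def ib by simp
  also have "\<dots> = - c_numerator (- \<tau>) M (M - L)"
    unfolding sign c_numerator_def ib_reflected binomial_symmetric[OF assms(2), symmetric] by simp
  finally show ?thesis .
qed

lemma c_numerator_cases:
  fixes \<tau> :: int and M L :: nat
  assumes "1 \<le> M" "L \<le> M"
  obtains (vanish) "1 \<le> int M * \<tau> + int L" "int M * \<tau> + int L < int M"
    | (nonneg) k where "\<tau> = int k" "M \<le> M * k + L"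
    | (reflect) k where "\<tau> = - int k" "L \<le> M * k"
proof -
  consider "1 \<le> int M * \<tau> + int L \<and> int M * \<tau> + int L < int M"
    | "int M \<le> int M * \<tau> + int L" | "int M * \<tau> + int L \<le> 0" by linarith
  then show ?thesis
  proof cases
    case 2
    then have "0 \<le> int M * \<tau>" using assms(2) by linarith
    then have "0 \<le> \<tau>" using assms(1) by (simp add: zero_le_mult_iff)
    then have "\<tau> = int (nat \<tau>)" "int M \<le> int (M * nat \<tau> + L)" using 2 by simp_all
    then show ?thesis using nonneg by (simp only: of_nat_le_iff)
  next
    case 3
    then have "int M * \<tau> \<le> 0" by linarith
    then have "\<tau> \<le> 0" using assms(1) by (simp add: mult_le_0_iff)
    then have "\<tau> = - int (nat (- \<tau>))" "int L \<le> int (M * nat (- \<tau>))" using 3 by simp_all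
    then show ?thesis using reflect by (simp only: of_nat_le_iff)
  qed (use vanish in blast)
qed

lemma prime_power_dvd_c_numerator_nonneg:
  assumes "prime p" "1 \<le> M" "p dvd M" "\<not> p dvd L"
  shows "int p ^ (2 * multiplicity p M) dvd c_numerator (int k) M L"
proof -
  have "L \<noteq> 0" using assms(4) by (metis dvd_0_right)
  have "\<not> p dvd M * k + L" using assms(3,4) by (simp add: dvd_add_right_iff)
  then have "p ^ (2 * (multiplicity p M - 0)) dvd (M choose L) * (M * k + L - 1 choose (M - 1))"
    using assms by (intro prime_power_dvd_binomial_pair) simp_all
  then have "int p ^ (2 * multiplicity p M) dvd int (M choose L) * int (M * k + L - 1 choose (M - 1))"
    by (metis int_dvd_int_iff minus_nat.diff_0 of_nat_mult of_nat_power)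
  then show ?thesis
    using \<open>L \<noteq> 0\<close> by (simp add: c_numerator_nonneg_eq dvd_mult mult.assoc)
qed

lemma prime_power_dvd_c_numerator:
  assumes "prime p" "1 \<le> M" "\<not> (p dvd M \<and> p dvd L)"
  shows "int p ^ (2 * multiplicity p M) dvd c_numerator \<tau> M L"
proof (cases "p dvd M \<and> L \<le> M")
  case False
  then consider "\<not> p dvd M" | "M < L" by linarith
  then show ?thesis
    by cases (simp_all add: not_dvd_imp_multiplicity_0 c_numerator_def binomial_eq_0)
next
  case True
  then have "\<not> p dvd L" using assms(3) by simp
  then have "\<not> p dvd M - L" using True dvd_diff_nat[of p M "M - L"] by auto
  have "L \<le> M" using True by simp
  with assms(2) show ?thesis
  proof (cases rule: c_numerator_cases[where \<tau> = \<tau>])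
    case vanish
    then show ?thesis by (simp add: c_numerator_vanish)
  next
    case (nonneg k)
    then show ?thesis
      using prime_power_dvd_c_numerator_nonneg[OF assms(1,2)] True \<open>\<not> p dvd L\<close> by simp
  next
    case (reflect k)
    then have "int p ^ (2 * multiplicity p M) dvd c_numerator (int k) M (M - L)"
      using prime_power_dvd_c_numerator_nonneg[OF assms(1,2)] True \<open>\<not> p dvd M - L\<close> by simp
    moreover have "int M * \<tau> + int L \<le> 0"
      using reflect by (simp flip: of_nat_mult)
    ultimately show ?thesis
      using c_numerator_reflect[OF assms(2) \<open>L \<le> M\<close>] reflect by simp
  qed
qed

lemma neg_one_power_prime_mult:
  fixes p A M :: nat
  assumes "prime p" "M \<le> A"
  shows "(-1::int) ^ (A + M) = (-1) ^ (p * (A + M)) * (if p = 2 then (-1) ^ (A - M) else 1)"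
proof (cases "p = 2")
  case True
  have "even (A - M) = even (A + M)" using assms(2) by simp
  then show ?thesis using True by (simp add: minus_one_power_iff)
next
  case False
  then have "odd p" using assms(1) prime_odd_nat prime_ge_2_nat by (metis le_neq_implies_less)
  then show ?thesis using False by (simp add: minus_one_power_iff)
qed

lemma c_numerator_scale_congr_nonneg:
  assumes "prime p" "1 \<le> M" "L \<le> M" "M \<le> M * k + L"
  shows "int p ^ (2 + 2 * multiplicity p M) dvd
    c_numerator (int k) (p * M) (p * L) - c_numerator (int k) M L"
proof -
  define A where "A = M * k + L"
  define \<sigma> :: int where "\<sigma> = (if p = 2 then (-1) ^ (A - M) else 1)"
  define X where "X = int (M choose L) * int (A - 1 choose (M - 1))"
  define X' where "X' = int (p * M choose p * L) * int (p * A - 1 choose (p * M - 1))"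
  have pA: "p * M * k + p * L = p * A" unfolding A_def by (simp add: algebra_simps)
  have "0 < p" using assms(1) prime_gt_0_nat by blast
  then have "1 \<le> p * M * k + p * L" using assms(2,4) unfolding pA A_def by simp
  from c_numerator_nonneg_eq[OF this] have "c_numerator (int k) (p * M) (p * L) = (-1) ^ (p * (A + M)) * X'"
    unfolding pA X'_def by (simp add: algebra_simps)
  moreover have "c_numerator (int k) M L = (-1) ^ (p * (A + M)) * (\<sigma> * X)"
    using c_numerator_nonneg_eq[of M k L] neg_one_power_prime_mult[OF assms(1), of M A] assms(2,4)
    unfolding A_def X_def \<sigma>_def by simp
  moreover have "int p ^ (2 + 2 * multiplicity p M) dvd X' - \<sigma> * X"
    unfolding X'_def X_def \<sigma>_def using assms unfolding A_def by (intro binomial_pair_congr) simp_all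
  ultimately show ?thesis by (simp flip: right_diff_distrib)
qed

lemma c_numerator_scale_congr:
  assumes "prime p" "1 \<le> M"
  shows "int p ^ (2 * multiplicity p (p * M)) dvd c_numerator \<tau> (p * M) (p * L) - c_numerator \<tau> M L"
proof -
  have "0 < p" using assms(1) prime_gt_0_nat by blast
  have "multiplicity p (p * M) = Suc (multiplicity p M)"
    using assms by (intro multiplicity_times_same) (auto simp: prime_nat_iff)
  then have exp: "2 * multiplicity p (p * M) = 2 + 2 * multiplicity p M" by simp
  show ?thesis
  proof (cases "L \<le> M")
    case False
    then show ?thesis using \<open>0 < p\<close> by (simp add: c_numerator_def binomial_eq_0)
  next
    case True
    with assms(2) show ?thesis
    proof (cases rule: c_numerator_cases[where \<tau> = \<tau>])
      case vanish
      then show ?thesis using \<open>0 < p\<close> by (simp add: c_numerator_vanish c_numerator_vanish_scaled)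
    next
      case (nonneg k)
      then show ?thesis unfolding exp using c_numerator_scale_congr_nonneg[OF assms True] by simp
    next
      case (reflect k)
      have "M \<le> M * k + (M - L)" using reflect by simp
      then have "int p ^ (2 + 2 * multiplicity p M) dvd
          c_numerator (int k) (p * M) (p * (M - L)) - c_numerator (int k) M (M - L)"
        using c_numerator_scale_congr_nonneg[OF assms] by simp
      moreover have "c_numerator \<tau> M L = - c_numerator (int k) M (M - L)"
        using c_numerator_reflect[OF assms(2) True] reflect by (simp flip: of_nat_mult)
      moreover have "c_numerator \<tau> (p * M) (p * L) = - c_numerator (int k) (p * M) (p * (M - L))"
        using c_numerator_reflect[of "p * M" "p * L" \<tau>] reflect True assms(2) \<open>0 < p\<close>
        by (simp add: diff_mult_distrib2 mult_left_mono flip: of_nat_mult)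
      ultimately show ?thesis unfolding exp
        by (metis dvd_minus_iff minus_diff_eq minus_diff_minus)
    qed
  qed
qed

section \<open>The M\<ouml>bius sum\<close>

lemma moebius_mu_eq_0_if_prime_square_dvd:
  assumes "prime p" "p ^ 2 dvd d"
  shows "moebius_mu d = 0"
proof -
  have "\<not> squarefree d"
    using assms unfolding squarefree_def by (metis not_prime_unit power2_eq_square)
  then show ?thesis unfolding moebius_mu_def by simp
qed

lemma moebius_mu_mult_prime:
  assumes "prime p" "\<not> p dvd d" "d \<noteq> 0"
  shows "moebius_mu (p * d) = - moebius_mu d"
proof -
  have "coprime p d" using assms(1,2) by (simp add: prime_imp_coprime)
  then have "squarefree (p * d) = squarefree d"
    using squarefree_multD(2)[of p d] squarefree_mult_coprime squarefree_prime[OF assms(1)] by blast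
  moreover have "prime_factors (p * d) = insert p (prime_factors d)"
    using prime_factorization_times_prime[OF assms(3,1)] by simp
  moreover have "p \<notin> prime_factors d" using assms(2) by (simp add: in_prime_factors_iff)
  ultimately show ?thesis unfolding moebius_mu_def by simp
qed

lemma sum_moebius_multiples_of_prime:
  fixes F :: "nat \<Rightarrow> int"
  assumes "prime p" "n \<noteq> 0"
  shows "(\<Sum>d | d dvd n \<and> p dvd d. moebius_mu d * F d) =
    - (\<Sum>d | d dvd n \<and> \<not> p dvd d. moebius_mu d * (if p * d dvd n then F (p * d) else 0))"
proof -
  define D0 where "D0 = {d. d dvd n \<and> \<not> p dvd d}"
  have fin: "finite D0" "finite {d. d dvd n \<and> p dvd d}"
    unfolding D0_def using assms(2) by (auto intro: finite_subset[OF _ finite_divisors_nat])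
  have "(\<Sum>d | d dvd n \<and> p dvd d. moebius_mu d * F d)
      = (\<Sum>d\<in>(\<lambda>d. p * d) ` {d \<in> D0. p * d dvd n}. moebius_mu d * F d)"
  proof (rule sum.mono_neutral_right[OF fin(2)])
    show "(\<lambda>d. p * d) ` {d \<in> D0. p * d dvd n} \<subseteq> {d. d dvd n \<and> p dvd d}"
      unfolding D0_def by auto
    show "\<forall>d\<in>{d. d dvd n \<and> p dvd d} - (\<lambda>d. p * d) ` {d \<in> D0. p * d dvd n}.
        moebius_mu d * F d = 0"
    proof
      fix d assume d: "d \<in> {d. d dvd n \<and> p dvd d} - (\<lambda>d. p * d) ` {d \<in> D0. p * d dvd n}"
      then obtain e where e: "d = p * e" "d dvd n" by blast
      then have "p dvd e" using d unfolding D0_def by (auto dest: dvd_mult_right)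
      then have "p ^ 2 dvd d" using e(1) by (simp add: power2_eq_square)
      then show "moebius_mu d * F d = 0" by (simp add: moebius_mu_eq_0_if_prime_square_dvd[OF assms(1)])
    qed
  qed
  also have "\<dots> = (\<Sum>d\<in>{d \<in> D0. p * d dvd n}. moebius_mu (p * d) * F (p * d))"
    using prime_gt_0_nat[OF assms(1)] by (subst sum.reindex) (auto simp: inj_on_def)
  also have "\<dots> = (\<Sum>d\<in>D0. if p * d dvd n then moebius_mu (p * d) * F (p * d) else 0)"
    by (rule sum.inter_filter[OF fin(1)])
  also have "\<dots> = (\<Sum>d\<in>D0. - (moebius_mu d * (if p * d dvd n then F (p * d) else 0)))"
    using assms unfolding D0_def by (intro sum.cong) (auto simp: moebius_mu_mult_prime)
  finally show ?thesis unfolding D0_def by (simp add: sum_negf)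
qed

lemma sum_moebius_split_prime:
  fixes F :: "nat \<Rightarrow> int"
  assumes "prime p" "n \<noteq> 0"
  shows "(\<Sum>d | d dvd n. moebius_mu d * F d) =
    (\<Sum>d | d dvd n \<and> \<not> p dvd d. moebius_mu d * (F d - (if p * d dvd n then F (p * d) else 0)))"
proof -
  have split: "{d. d dvd n} = {d. d dvd n \<and> \<not> p dvd d} \<union> {d. d dvd n \<and> p dvd d}" by auto
  have "finite {d. d dvd n \<and> \<not> p dvd d}" "finite {d. d dvd n \<and> p dvd d}"
    using assms(2) by (auto intro: finite_subset[OF _ finite_divisors_nat])
  then have "(\<Sum>d | d dvd n. moebius_mu d * F d)
      = (\<Sum>d | d dvd n \<and> \<not> p dvd d. moebius_mu d * F d)
        + (\<Sum>d | d dvd n \<and> p dvd d. moebius_mu d * F d)"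
    unfolding split by (rule sum.union_disjoint) auto
  then show ?thesis
    unfolding sum_moebius_multiples_of_prime[OF assms] by (simp add: right_diff_distrib sum_subtractf)
qed

lemma prime_power_dvd_moebius_summand:
  assumes "prime p" "1 \<le> m" "d dvd gcd m l" "\<not> p dvd d"
  shows "int p ^ (2 * multiplicity p m) dvd c_numerator \<tau> (m div d) (l div d)
      - (if p * d dvd gcd m l then c_numerator \<tau> (m div (p * d)) (l div (p * d)) else 0)"
proof -
  have d: "d dvd m" "d dvd l" "d \<noteq> 0" using assms(2,3) by auto
  have "multiplicity p (m div d) = multiplicity p m"
    using d(1) assms(1,4)
    by (metis dvd_mult_div_cancel multiplicity_prime_elem_times_other prime_elem_nat_iff prime_nat_iff)
  moreover have "1 \<le> m div d" using d assms(2) by (metis One_nat_def dvd_div_eq_0_iff less_one not_less)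
  moreover have "int p ^ (2 * multiplicity p (m div d)) dvd
      c_numerator \<tau> (m div d) (l div d) - c_numerator \<tau> (m div (p * d)) (l div (p * d))"
    if "p * d dvd gcd m l"
  proof -
    have "m div d = p * (m div (p * d))" "l div d = p * (l div (p * d))"
      using that d(3) by (auto simp: div_mult2_eq elim!: dvdE)
    moreover have "1 \<le> m div (p * d)"
      using that assms(2) by (metis One_nat_def dvd_div_eq_0_iff gcd_dvd1 dvd_trans less_one not_less)
    ultimately show ?thesis using c_numerator_scale_congr[OF assms(1)] by simp
  qed
  moreover have "\<not> (p dvd m div d \<and> p dvd l div d)" if "\<not> p * d dvd gcd m l"
    using that d by (auto simp: dvd_div_iff_mult)
  ultimately show ?thesis
    using prime_power_dvd_c_numerator[OF assms(1), of "m div d" "l div d" \<tau>] by auto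
qed

lemma prime_power_dvd_moebius_sum:
  assumes "prime p" "1 \<le> m"
  shows "int p ^ (2 * multiplicity p m) dvd
    (\<Sum>d | d dvd gcd m l. moebius_mu d * c_numerator \<tau> (m div d) (l div d))"
proof -
  have "gcd m l \<noteq> 0" using assms(2) by simp
  show ?thesis
    unfolding sum_moebius_split_prime[OF assms(1) \<open>gcd m l \<noteq> 0\<close>]
    by (intro dvd_sum dvd_mult prime_power_dvd_moebius_summand[OF assms]) simp_all
qed

lemma n_inv_eq:
  assumes "1 \<le> m"
  shows "n_inv \<tau> m l =
    - of_int (\<Sum>d | d dvd gcd m l. moebius_mu d * c_numerator \<tau> (m div d) (l div d)) / of_nat (m ^ 2)"
proof -
  have "n_inv \<tau> m l = (\<Sum>d | d dvd gcd m l.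
      - of_int (moebius_mu d * c_numerator \<tau> (m div d) (l div d)) / of_nat (m ^ 2))"
    unfolding n_inv_def
  proof (rule sum.cong)
    fix d assume "d \<in> {d. d dvd gcd m l}"
    then have "d * (m div d) = m" "d \<noteq> 0" "m div d \<noteq> 0" using assms by auto
    then show "of_int (moebius_mu d) / of_nat (d ^ 2) * c_coeff \<tau> (m div d) (l div d)
        = - of_int (moebius_mu d * c_numerator \<tau> (m div d) (l div d)) / of_nat (m ^ 2)"
      unfolding c_coeff_eq by (metis (no_types, lifting) divide_divide_eq_left' mult_minus_right
          of_int_mult of_nat_mult power_mult_distrib times_divide_times_eq)
  qed simp
  then show ?thesis by (simp add: sum_divide_distrib sum_negf)
qed

lemma int_dvd_if_prime_powers_dvd:
  assumes "n \<noteq> 0" "\<And>p. prime p \<Longrightarrow> int p ^ multiplicity p n dvd S"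
  shows "int n dvd S"
proof (cases "S = 0")
  case False
  have "n dvd nat \<bar>S\<bar>"
  proof (rule multiplicity_le_imp_dvd[OF assms(1)])
    fix p :: nat assume "prime p"
    then have "p ^ multiplicity p n dvd nat \<bar>S\<bar>"
      using assms(2) by (metis dvd_abs_iff int_dvd_int_iff int_nat_eq abs_ge_zero of_nat_power)
    then show "multiplicity p n \<le> multiplicity p (nat \<bar>S\<bar>)"
      using False \<open>prime p\<close> by (intro multiplicity_geI) (simp_all add: prime_nat_iff)
  qed
  then show ?thesis by (metis dvd_abs_iff int_dvd_int_iff int_nat_eq abs_ge_zero)
qed simp

theorem theorem4p5:
  fixes \<tau> :: int and m l :: nat
  assumes "m \<ge> 1"
  shows "n_inv \<tau> m l \<in> \<int>"
proof -
  define S where "S = (\<Sum>d | d dvd gcd m l. moebius_mu d * c_numerator \<tau> (m div d) (l div d))"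
  have "int (m ^ 2) dvd S"
  proof (rule int_dvd_if_prime_powers_dvd)
    show "m ^ 2 \<noteq> 0" using assms by simp
    fix p :: nat assume "prime p"
    then have "multiplicity p (m ^ 2) = 2 * multiplicity p m"
      using assms by (simp add: prime_elem_multiplicity_power_distrib)
    then show "int p ^ multiplicity p (m ^ 2) dvd S"
      unfolding S_def using prime_power_dvd_moebius_sum[OF \<open>prime p\<close> assms] by simp
  qed
  then obtain k where "S = int (m ^ 2) * k" ..
  then have "n_inv \<tau> m l = of_int (- k)"
    using n_inv_eq[OF assms, of \<tau> l] assms unfolding S_def[symmetric] by simp
  then show ?thesis by simp
qed

end
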